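(* Let $\mathcal{S}$ be a finite thick generalized quadrangle of order $(s,t)$ with a group $G$ of automorphisms acting regularly on the points. Let $g\in G$ with $g^2\ne 1$, and let $\ell$ be a line with $\ell^g\sim\ell$. Then there are exactly two points $P$ incident with $\ell$ such that $P\sim P^g$, and for each of them the points $P,P^g,P^{g^{-1}}$ are not collinear.
   Context: A generalized quadrangle of order $(s,t)$: each line has $s+1$ points, each point is on $t+1$ lines, and for each non-incident point-line pair $(P,\ell)$ there is a unique point on $\ell$ collinear with $P$; thick means $\min\{s,t\}\ge2$. $P\sim Q$ means distinct collinear points; $\ell\sim m$ means distinct concurrent lines. *)

theory Defs
  imports Main
begin

definition pcollinear :: "('p \<Rightarrow> 'l \<Rightarrow> bool) \<Rightarrow> 'p \<Rightarrow> 'p \<Rightarrow> bool" where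
  "pcollinear I P Q \<longleftrightarrow> P \<noteq> Q \<and> (\<exists>l. I P l \<and> I Q l)"

definition lconcurrent :: "('p \<Rightarrow> 'l \<Rightarrow> bool) \<Rightarrow> 'l \<Rightarrow> 'l \<Rightarrow> bool" where
  "lconcurrent I l m \<longleftrightarrow> l \<noteq> m \<and> (\<exists>P. I P l \<and> I P m)"

definition collinear3 :: "('p \<Rightarrow> 'l \<Rightarrow> bool) \<Rightarrow> 'p \<Rightarrow> 'p \<Rightarrow> 'p \<Rightarrow> bool" where
  "collinear3 I P Q R \<longleftrightarrow> (\<exists>l. I P l \<and> I Q l \<and> I R l)"

definition GQ :: "('p::finite \<Rightarrow> 'l::finite \<Rightarrow> bool) \<Rightarrow> nat \<Rightarrow> nat \<Rightarrow> bool" where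
  "GQ I s t \<longleftrightarrow>
     (\<forall>l. card {P. I P l} = s + 1) \<and>
     (\<forall>P. card {l. I P l} = t + 1) \<and>
     (\<forall>P Q l m. P \<noteq> Q \<and> I P l \<and> I Q l \<and> I P m \<and> I Q m \<longrightarrow> l = m) \<and>
     (\<forall>P l. \<not> I P l \<longrightarrow> (\<exists>!Q. I Q l \<and> pcollinear I P Q))"

definition thick_GQ :: "('p::finite \<Rightarrow> 'l::finite \<Rightarrow> bool) \<Rightarrow> nat \<Rightarrow> nat \<Rightarrow> bool" where
  "thick_GQ I s t \<longleftrightarrow> GQ I s t \<and> min s t \<ge> 2"

definition automorphism :: "('p \<Rightarrow> 'l \<Rightarrow> bool) \<Rightarrow> ('p \<Rightarrow> 'p) \<times> ('l \<Rightarrow> 'l) \<Rightarrow> bool" where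
  "automorphism I g \<longleftrightarrow> bij (fst g) \<and> bij (snd g) \<and>
     (\<forall>P l. I (fst g P) (snd g l) \<longleftrightarrow> I P l)"

definition automorphism_group ::
  "('p \<Rightarrow> 'l \<Rightarrow> bool) \<Rightarrow> (('p \<Rightarrow> 'p) \<times> ('l \<Rightarrow> 'l)) set \<Rightarrow> bool" where
  "automorphism_group I G \<longleftrightarrow>
     (\<forall>g\<in>G. automorphism I g) \<and> (id, id) \<in> G \<and>
     (\<forall>g\<in>G. \<forall>h\<in>G. (fst g \<circ> fst h, snd g \<circ> snd h) \<in> G) \<and>
     (\<forall>g\<in>G. (inv (fst g), inv (snd g)) \<in> G)"

definition regular_on_points :: "(('p \<Rightarrow> 'p) \<times> ('l \<Rightarrow> 'l)) set \<Rightarrow> bool" where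
  "regular_on_points G \<longleftrightarrow> (\<forall>P Q. \<exists>!g. g \<in> G \<and> fst g P = Q)"

end

theory Submission
  imports Defs
begin

text \<open>Since \<open>G\<close> is regular and \<open>g \<noteq> 1\<close>, \<open>g\<close> fixes no point; this is all that is used of
  \<open>g\<^sup>2 \<noteq> 1\<close>. Let \<open>X\<close> be the common point
  of \<open>\<ell>\<close> and \<open>\<ell>\<^sup>g\<close> and \<open>Y = X\<^sup>g\<^sup>-\<^sup>1\<close>. Then \<open>X \<sim> X\<^sup>g\<close> on \<open>\<ell>\<^sup>g\<close> and \<open>Y \<sim> Y\<^sup>g = X\<close> on \<open>\<ell>\<close>. Any
  other point \<open>P\<close> of \<open>\<ell>\<close> with \<open>P \<sim> P\<^sup>g\<close> has \<open>P\<^sup>g\<close> on \<open>\<ell>\<^sup>g\<close> but not on \<open>\<ell>\<close>, so \<open>P\<^sup>g\<close> would be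
  collinear with two points \<open>P \<noteq> X\<close> of \<open>\<ell>\<close>, against the GQ axiom. For \<open>P \<in> {X, Y}\<close>, a line
  through \<open>P, P\<^sup>g, P\<^sup>g\<^sup>-\<^sup>1\<close> would have to be both \<open>\<ell>\<close> and \<open>\<ell>\<^sup>g\<close>.\<close>

lemma regular_fixed_point_imp_identity:
  assumes "automorphism_group I G" and "regular_on_points G" and "g \<in> G"
    and "fst g P = P"
  shows "g = (id, id)"
proof -
  have "(id, id) \<in> G" using assms(1) unfolding automorphism_group_def by blast
  then show ?thesis
    using assms(2-4) unfolding regular_on_points_def by (metis fst_conv id_apply)
qed

locale fixed_point_free_collineation =
  fixes I :: "'p \<Rightarrow> 'l \<Rightarrow> bool" and f :: "'p \<Rightarrow> 'p" and h :: "'l \<Rightarrow> 'l"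
  assumes line_unique: "\<And>P Q l m. P \<noteq> Q \<Longrightarrow> I P l \<Longrightarrow> I Q l \<Longrightarrow> I P m \<Longrightarrow> I Q m \<Longrightarrow> l = m"
    and unique_collinear_on_line: "\<And>P l. \<not> I P l \<Longrightarrow> \<exists>!Q. I Q l \<and> pcollinear I P Q"
    and automorphism: "automorphism I (f, h)"
    and no_fixed_point: "\<And>P. f P \<noteq> P"
begin

lemma bij_f: "bij f"
  using automorphism unfolding automorphism_def by simp

lemma incident_image_iff [simp]: "I (f P) (h m) \<longleftrightarrow> I P m"
  using automorphism unfolding automorphism_def by simp

lemma f_inv_f [simp]: "f (inv f P) = P"
  using bij_f by (simp add: bij_is_surj surj_f_inv_f)

lemma inv_f_neq: "inv f P \<noteq> P"
  using no_fixed_point f_inv_f by metis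

context
  fixes l :: 'l and X :: 'p
  assumes on_line: "I X l" and on_image: "I X (h l)" and image_neq: "h l \<noteq> l"
begin

lemma meet_point_unique: "I P l \<Longrightarrow> I P (h l) \<Longrightarrow> P = X"
  using line_unique on_line on_image image_neq by metis

lemma inv_f_on_line: "I (inv f X) l"
  using incident_image_iff[of "inv f X" l] on_image by simp

lemma collinear_with_image_on_line_iff:
  "I P l \<and> pcollinear I P (f P) \<longleftrightarrow> P = X \<or> P = inv f X"
proof
  assume P: "I P l \<and> pcollinear I P (f P)"
  show "P = X \<or> P = inv f X"
  proof (rule ccontr)
    assume "\<not> (P = X \<or> P = inv f X)"
    then have "P \<noteq> X" and "f P \<noteq> X"
      by (auto simp: bij_f bij_inv_eq_iff)
    have fP_image: "I (f P) (h l)" using P by simp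
    then have "\<not> I (f P) l" using meet_point_unique \<open>f P \<noteq> X\<close> by blast
    moreover have "pcollinear I (f P) P"
      using P unfolding pcollinear_def by auto
    moreover have "pcollinear I (f P) X"
      using fP_image on_image \<open>f P \<noteq> X\<close> unfolding pcollinear_def by blast
    ultimately show False
      using unique_collinear_on_line P on_line \<open>P \<noteq> X\<close> by blast
  qed
next
  assume "P = X \<or> P = inv f X"
  then show "I P l \<and> pcollinear I P (f P)"
    using on_line on_image inv_f_on_line no_fixed_point inv_f_neq
    unfolding pcollinear_def by (metis incident_image_iff f_inv_f)
qed

lemma not_collinear3_image_preimage:
  assumes "P = X \<or> P = inv f X"
  shows "\<not> collinear3 I P (f P) (inv f P)"
proof
  assume "collinear3 I P (f P) (inv f P)"
  then obtain n where n: "I P n" "I (f P) n" "I (inv f P) n"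
    unfolding collinear3_def by blast
  from assms show False
  proof
    assume "P = X"
    then have "n = h l" and "n = l"
      using line_unique n on_line on_image inv_f_on_line no_fixed_point inv_f_neq
      by (metis incident_image_iff)+
    then show False using image_neq by simp
  next
    assume P: "P = inv f X"
    then have "n = l"
      using line_unique n on_line inv_f_on_line inv_f_neq by (metis f_inv_f)
    then have "I (inv f P) l" using n by simp
    then have "I P (h l)" using incident_image_iff[of "inv f P" l] by simp
    then show False using meet_point_unique P inv_f_on_line inv_f_neq by metis
  qed
qed

end

end

theorem lemma3p7:
  fixes I :: "'p::finite \<Rightarrow> 'l::finite \<Rightarrow> bool"
    and s t :: nat
    and G :: "(('p \<Rightarrow> 'p) \<times> ('l \<Rightarrow> 'l)) set"
    and g :: "('p \<Rightarrow> 'p) \<times> ('l \<Rightarrow> 'l)"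
    and l :: 'l
  assumes "thick_GQ I s t"
    and "automorphism_group I G"
    and "regular_on_points G"
    and "g \<in> G"
    and "(fst g \<circ> fst g, snd g \<circ> snd g) \<noteq> (id, id)"
    and "lconcurrent I (snd g l) l"
  shows "card {P. I P l \<and> pcollinear I P (fst g P)} = 2 \<and>
         (\<forall>P. I P l \<and> pcollinear I P (fst g P) \<longrightarrow>
              \<not> collinear3 I P (fst g P) (inv (fst g) P))"
proof -
  have "GQ I s t" using assms(1) unfolding thick_GQ_def by blast
  moreover have "automorphism I (fst g, snd g)"
    using assms(2,4) unfolding automorphism_group_def by simp
  moreover have "fst g P \<noteq> P" for P
    using regular_fixed_point_imp_identity[OF assms(2-4)] assms(5) by fastforce
  ultimately interpret fixed_point_free_collineation I "fst g" "snd g"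
    by unfold_locales (auto simp: GQ_def)
  obtain X where X: "I X l" "I X (snd g l)" "snd g l \<noteq> l"
    using assms(6) unfolding lconcurrent_def by blast
  have "{P. I P l \<and> pcollinear I P (fst g P)} = {X, inv (fst g) X}"
    using collinear_with_image_on_line_iff[OF X] by blast
  then show ?thesis
    using inv_f_neq[of X] not_collinear3_image_preimage[OF X]
      collinear_with_image_on_line_iff[OF X] by auto
qed

end
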